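(* For each integer $d\ge 2$, the hypergraph $C_d$ is tranquil.
   Context: For an integer $d\ge 2$, $C_d$ is the $d$-uniform hypergraph with vertex set $\mathbb{Z}^d$ and hyperedges $\{x+re_1,\ldots,x+re_d\}$ for all $x\in\mathbb{Z}^d$ and positive integers $r$, where $e_1,\ldots,e_d$ is the standard basis of $\mathbb{Z}^d$. A closed walk of length $\ell$ in a hypergraph $H$ is a sequence $v_0F_0v_1F_1\ldots F_{\ell-1}v_0$ of alternating vertices and hyperedges such that $v_i,v_{i+1}\in F_i$ for all $0\le i<\ell$ (indices mod $\ell$, so $v_\ell=v_0$), $F_i\neq F_{i+1}$ for each $0\le i<\ell$ (indices mod $\ell$), and $v_1,\ldots,v_{\ell-1}$ are pairwise distinct (the $F_i$ need not be distinct). An $r$-uniform hypergraph $H$ is tranquil if there is a family of labellings $\lambda=\{\lambda_F\}_{F\in E(H)}$, with $\lambda_F:F\to\{1,\ldots,r\}$, such that for every closed walk $W=v_0F_0v_1\ldots F_{\ell-1}v_0$ of $H$, the multigraph with vertex set $\{1,\ldots,r\}$ and edge multiset $\{\lambda_{F_i}(v_i)\lambda_{F_i}(v_{i+1}) : 0\le i<\ell\}$ is bridgeless (a bridge is an edge whose removal increases the number of connected components). *)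

theory Defs
  imports Main "HOL-Library.Multiset"
begin

text \<open>A multigraph on vertex set V is given by a multiset of (unordered) edges,
  each edge represented as a pair (a,b) of its endpoints.\<close>

definition mg_conn :: "'a set \<Rightarrow> ('a \<times> 'a) multiset \<Rightarrow> ('a \<times> 'a) set" where
  "mg_conn V M = (((set_mset M) \<union> (set_mset M)\<inverse>) \<inter> (V \<times> V))\<^sup>*"

definition mg_num_components :: "'a set \<Rightarrow> ('a \<times> 'a) multiset \<Rightarrow> nat" where
  "mg_num_components V M = card (V // mg_conn V M)"

definition mg_is_bridge :: "'a set \<Rightarrow> ('a \<times> 'a) multiset \<Rightarrow> 'a \<times> 'a \<Rightarrow> bool" where
  "mg_is_bridge V M e \<longleftrightarrow> e \<in># M \<and>
     mg_num_components V (M - {#e#}) > mg_num_components V M"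

definition mg_bridgeless :: "'a set \<Rightarrow> ('a \<times> 'a) multiset \<Rightarrow> bool" where
  "mg_bridgeless V M \<longleftrightarrow> (\<forall>e. \<not> mg_is_bridge V M e)"

text \<open>A hypergraph is given by its vertex set V and its set of hyperedges E.
  A closed walk of length l is v_0 F_0 v_1 ... F_(l-1) v_0, encoded by
  vs i = v_i and Fs i = F_i for i < l (indices mod l).\<close>

definition closed_walk ::
  "'v set \<Rightarrow> 'v set set \<Rightarrow> nat \<Rightarrow> (nat \<Rightarrow> 'v) \<Rightarrow> (nat \<Rightarrow> 'v set) \<Rightarrow> bool" where
  "closed_walk V E l vs Fs \<longleftrightarrow> 0 < l \<and> vs 0 \<in> V \<and>
     (\<forall>i<l. Fs i \<in> E \<and> vs i \<in> Fs i \<and> vs (Suc i mod l) \<in> Fs i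
            \<and> Fs i \<noteq> Fs (Suc i mod l)) \<and>
     inj_on vs {1..<l}"

definition walk_label_multigraph ::
  "('v set \<Rightarrow> 'v \<Rightarrow> nat) \<Rightarrow> nat \<Rightarrow> (nat \<Rightarrow> 'v) \<Rightarrow> (nat \<Rightarrow> 'v set) \<Rightarrow> (nat \<times> nat) multiset" where
  "walk_label_multigraph lab l vs Fs =
     mset (map (\<lambda>i. (lab (Fs i) (vs i), lab (Fs i) (vs (Suc i mod l)))) [0..<l])"

definition tranquil :: "'v set \<Rightarrow> 'v set set \<Rightarrow> nat \<Rightarrow> bool" where
  "tranquil V E r \<longleftrightarrow> (\<exists>lab :: 'v set \<Rightarrow> 'v \<Rightarrow> nat.
     (\<forall>F\<in>E. bij_betw (lab F) F {1..r}) \<and>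
     (\<forall>l vs Fs. closed_walk V E l vs Fs \<longrightarrow>
        mg_bridgeless {1..r} (walk_label_multigraph lab l vs Fs)))"

text \<open>Z^d is represented by functions nat \<Rightarrow> int vanishing outside {0..<d};
  coordinate i (0-based) corresponds to e_(i+1).\<close>

definition Zd :: "nat \<Rightarrow> (nat \<Rightarrow> int) set" where
  "Zd d = {x. \<forall>i\<ge>d. x i = 0}"

definition unit_vec :: "nat \<Rightarrow> nat \<Rightarrow> int" where
  "unit_vec i = (\<lambda>j. if j = i then 1 else 0)"

definition C_edges :: "nat \<Rightarrow> (nat \<Rightarrow> int) set set" where
  "C_edges d = {F. \<exists>x\<in>Zd d. \<exists>r::int. r > 0 \<and>
       F = (\<lambda>i. (\<lambda>j. x j + r * unit_vec i j)) ` {0..<d}}"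

end

theory Submission
  imports Defs
begin

(* Label the vertex x + r e_i of a hyperedge by i. Suppose (a, b) were a bridge of the label
   multigraph of a closed walk, and let S be the set of labels still connected to a after
   removing one copy of (a, b). The potential y \<mapsto> \<Sum>{y i | i \<in> S} changes along a step
   inside a hyperedge of radius r by r (1_S q - 1_S p), where (p, q) is the label edge of the
   step: by 0 unless (p, q) = (a, b), and by -r < 0 otherwise. Around a closed walk these
   changes telescope to 0, a contradiction. *)

lemma mg_conn_sym:
  assumes "(p, q) \<in> mg_conn V M"
  shows "(q, p) \<in> mg_conn V M"
proof -
  let ?G = "(set_mset M \<union> (set_mset M)\<inverse>) \<inter> (V \<times> V)"
  have "(q, p) \<in> (?G\<inverse>)\<^sup>*"
    using assms unfolding mg_conn_def by (simp add: rtrancl_converse)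
  moreover have "?G\<inverse> = ?G" by auto
  ultimately show ?thesis unfolding mg_conn_def by simp
qed

lemma mg_conn_diff_edge:
  assumes "(a, b) \<in> mg_conn V (M - {#(a, b)#})"
  shows "mg_conn V (M - {#(a, b)#}) = mg_conn V M"
proof -
  let ?G = "\<lambda>M. (set_mset M \<union> (set_mset M)\<inverse>) \<inter> (V \<times> V)"
  let ?R' = "mg_conn V (M - {#(a, b)#})"
  have "set_mset M \<subseteq> insert (a, b) (set_mset (M - {#(a, b)#}))"
    by (metis diff_single_trivial insert_DiffM set_mset_add_mset_insert subset_insertI order_refl)
  then have "?G M \<subseteq> ?G (M - {#(a, b)#}) \<union> {(a, b), (b, a)}"
    by blast
  moreover have "(b, a) \<in> ?R'" using assms by (rule mg_conn_sym)
  moreover have "?G (M - {#(a, b)#}) \<subseteq> ?R'"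
    unfolding mg_conn_def by blast
  ultimately have "?G M \<subseteq> (?G (M - {#(a, b)#}))\<^sup>*"
    using assms unfolding mg_conn_def by blast
  moreover have "?G (M - {#(a, b)#}) \<subseteq> ?G M"
    by (auto dest: in_diffD)
  ultimately show ?thesis
    unfolding mg_conn_def by (rule rtrancl_subset[symmetric, rotated])
qed

lemma mg_bridge_cut:
  assumes "mg_is_bridge V M (a, b)"
  obtains S where "a \<in> S" "b \<notin> S"
    "\<And>p q. (p, q) \<in># M - {#(a, b)#} \<Longrightarrow> p \<in> V \<Longrightarrow> q \<in> V \<Longrightarrow> p \<in> S \<longleftrightarrow> q \<in> S"
proof -
  let ?R' = "mg_conn V (M - {#(a, b)#})"
  have "(a, b) \<notin> ?R'"
  proof
    assume "(a, b) \<in> ?R'"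
    then have "?R' = mg_conn V M" by (rule mg_conn_diff_edge)
    then show False using assms unfolding mg_is_bridge_def mg_num_components_def by simp
  qed
  moreover have "a \<in> ?R' `` {a}" unfolding mg_conn_def by blast
  moreover have "p \<in> ?R' `` {a} \<longleftrightarrow> q \<in> ?R' `` {a}"
    if "(p, q) \<in># M - {#(a, b)#}" "p \<in> V" "q \<in> V" for p q
  proof -
    have "(p, q) \<in> ?R'" using that unfolding mg_conn_def by blast
    moreover have "(q, p) \<in> ?R'" using calculation by (rule mg_conn_sym)
    ultimately have "(a, p) \<in> ?R' \<longleftrightarrow> (a, q) \<in> ?R'"
      unfolding mg_conn_def by (meson rtrancl_trans)
    then show ?thesis by blast
  qed
  ultimately show ?thesis using that by blast
qed

lemma mg_bridgeless_if_cuts_balanced: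
  fixes f :: "nat \<Rightarrow> 'a \<times> 'a" and w :: "nat \<Rightarrow> 'b :: linordered_idom"
  assumes edges: "\<And>k. k < l \<Longrightarrow> f k \<in> V \<times> V"
    and pos: "\<And>k. k < l \<Longrightarrow> 0 < w k"
    and balanced: "\<And>S. (\<Sum>k<l. w k * (of_bool (snd (f k) \<in> S) - of_bool (fst (f k) \<in> S))) = 0"
  shows "mg_bridgeless V (mset (map f [0..<l]))"
  unfolding mg_bridgeless_def
proof (intro allI notI)
  let ?M = "mset (map f [0..<l])"
  fix e assume bridge: "mg_is_bridge V ?M e"
  obtain a b where e: "e = (a, b)" by fastforce
  obtain S where S: "a \<in> S" "b \<notin> S"
    "\<And>p q. (p, q) \<in># ?M - {#e#} \<Longrightarrow> p \<in> V \<Longrightarrow> q \<in> V \<Longrightarrow> p \<in> S \<longleftrightarrow> q \<in> S"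
    using mg_bridge_cut bridge unfolding e by metis
  let ?t = "\<lambda>k. w k * (of_bool (snd (f k) \<in> S) - of_bool (fst (f k) \<in> S))"
  have t_le: "?t k \<le> 0" if "k < l" for k
  proof (cases "f k = e")
    case True
    then show ?thesis using pos[OF that] S(1,2) e by simp
  next
    case False
    then have "f k \<in># ?M - {#e#}" using that by (simp add: in_diff_count)
    then show ?thesis using S(3) edges[OF that] by (cases "f k") auto
  qed
  obtain k0 where k0: "k0 < l" "f k0 = e"
    using bridge unfolding mg_is_bridge_def by auto
  have "?t k0 < 0" using pos[OF k0(1)] S(1,2) e k0(2) by simp
  then have "(\<Sum>k<l. ?t k) < (\<Sum>k<l. 0)"
    by (intro sum_strict_mono_ex1 bexI[of _ k0]) (use t_le k0(1) in auto)
  with balanced show False by simp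
qed

lemma sum_telescope_mod:
  fixes g :: "nat \<Rightarrow> 'a :: ab_group_add"
  assumes "0 < l"
  shows "(\<Sum>k<l. g (Suc k mod l) - g k) = 0"
proof -
  obtain m where l: "l = Suc m" using assms not0_implies_Suc by blast
  have "(\<Sum>k<Suc m. g (Suc k mod Suc m) - g k) = (\<Sum>k<m. g (Suc k mod Suc m) - g k) + (g 0 - g m)"
    by simp
  also have "(\<Sum>k<m. g (Suc k mod Suc m) - g k) = (\<Sum>k<m. g (Suc k) - g k)"
    by (rule sum.cong) auto
  also have "\<dots> + (g 0 - g m) = 0" by (simp add: sum_lessThan_telescope)
  finally show ?thesis using l by simp
qed

definition corner_point :: "(nat \<Rightarrow> int) \<Rightarrow> int \<Rightarrow> nat \<Rightarrow> nat \<Rightarrow> int" where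
  "corner_point x r i = (\<lambda>j. x j + r * unit_vec i j)"

definition corner :: "nat \<Rightarrow> (nat \<Rightarrow> int) \<Rightarrow> int \<Rightarrow> (nat \<Rightarrow> int) set" where
  "corner d x r = corner_point x r ` {0..<d}"

definition corner_param :: "nat \<Rightarrow> (nat \<Rightarrow> int) set \<Rightarrow> (nat \<Rightarrow> int) \<times> int" where
  "corner_param d F = (SOME (x, r). 0 < r \<and> F = corner d x r)"

definition corner_label :: "nat \<Rightarrow> (nat \<Rightarrow> int) set \<Rightarrow> (nat \<Rightarrow> int) \<Rightarrow> nat" where
  "corner_label d F v =
     (case corner_param d F of (x, r) \<Rightarrow> Suc (SOME i. i < d \<and> v = corner_point x r i))"

lemma corner_paramE:
  assumes "F \<in> C_edges d"
  obtains x r where "corner_param d F = (x, r)" "0 < r" "F = corner d x r"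
proof -
  have "\<exists>p. case p of (x, r) \<Rightarrow> 0 < r \<and> F = corner d x r"
    using assms unfolding C_edges_def corner_def corner_point_def by auto
  then have "case corner_param d F of (x, r) \<Rightarrow> 0 < r \<and> F = corner d x r"
    unfolding corner_param_def by (rule someI_ex)
  then show ?thesis using that by (cases "corner_param d F") auto
qed

lemma inj_corner_point:
  assumes "r \<noteq> 0"
  shows "inj (corner_point x r)"
proof
  fix i i' assume "corner_point x r i = corner_point x r i'"
  then have "x i + r * unit_vec i i = x i + r * unit_vec i' i"
    unfolding corner_point_def by metis
  then show "i = i'" using assms unfolding unit_vec_def by (auto split: if_splits)
qed

lemma corner_label_corner_point:
  assumes "corner_param d F = (x, r)" "r \<noteq> 0" "i < d"
  shows "corner_label d F (corner_point x r i) = Suc i"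
proof -
  have "(SOME i'. i' < d \<and> corner_point x r i = corner_point x r i') = i"
    using assms(3) inj_corner_point[OF assms(2)] by (auto intro: some_equality dest: injD)
  then show ?thesis unfolding corner_label_def assms(1) by simp
qed

lemma bij_betw_corner_label:
  assumes "F \<in> C_edges d"
  shows "bij_betw (corner_label d F) F {1..d}"
proof -
  obtain x r where xr: "corner_param d F = (x, r)" "0 < r" "F = corner d x r"
    using corner_paramE[OF assms] .
  have point: "bij_betw (corner_point x r) {0..<d} F"
    using xr(3) inj_on_subset[OF inj_corner_point subset_UNIV] xr(2) unfolding corner_def
    by (intro bij_betw_imageI) auto
  have "\<And>i. i \<in> {0..<d} \<Longrightarrow> (corner_label d F \<circ> corner_point x r) i = Suc i"
    using corner_label_corner_point[OF xr(1)] xr(2) by simp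
  moreover have "bij_betw Suc {0..<d} {1..d}"
    by (simp add: bij_betw_def atLeastLessThanSuc_atLeastAtMost[symmetric])
  ultimately have "bij_betw (corner_label d F \<circ> corner_point x r) {0..<d} {1..d}"
    using bij_betw_cong by blast
  then show ?thesis using point by (simp add: bij_betw_comp_iff)
qed

definition coord_sum :: "nat \<Rightarrow> nat set \<Rightarrow> (nat \<Rightarrow> int) \<Rightarrow> int" where
  "coord_sum d S y = (\<Sum>j<d. if Suc j \<in> S then y j else 0)"

lemma coord_sum_corner_point:
  assumes "i < d"
  shows "coord_sum d S (corner_point x r i) = coord_sum d S x + r * of_bool (Suc i \<in> S)"
proof -
  have "coord_sum d S (corner_point x r i) =
      coord_sum d S x + (\<Sum>j<d. if j = i then r * of_bool (Suc i \<in> S) else 0)"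
    unfolding coord_sum_def corner_point_def unit_vec_def sum.distrib[symmetric]
    by (rule sum.cong) auto
  then show ?thesis using assms by simp
qed

lemma coord_sum_diff_in_C_edge:
  assumes "F \<in> C_edges d" "v \<in> F" "w \<in> F"
  shows "coord_sum d S w - coord_sum d S v =
    snd (corner_param d F) * (of_bool (corner_label d F w \<in> S) - of_bool (corner_label d F v \<in> S))"
proof -
  obtain x r where xr: "corner_param d F = (x, r)" "0 < r" "F = corner d x r"
    using corner_paramE[OF assms(1)] .
  obtain i i' where "i < d" "v = corner_point x r i" "i' < d" "w = corner_point x r i'"
    using assms(2,3) xr(3) unfolding corner_def by auto
  then show ?thesis
    using xr corner_label_corner_point[OF xr(1)] by (simp add: coord_sum_corner_point algebra_simps)
qed

lemma C_walk_cuts_balanced: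
  assumes "0 < l"
    and step: "\<And>k. k < l \<Longrightarrow> Fs k \<in> C_edges d \<and> vs k \<in> Fs k \<and> vs (Suc k mod l) \<in> Fs k"
  shows "(\<Sum>k<l. snd (corner_param d (Fs k)) *
            (of_bool (corner_label d (Fs k) (vs (Suc k mod l)) \<in> S)
             - of_bool (corner_label d (Fs k) (vs k) \<in> S))) = 0"
proof -
  have "(\<Sum>k<l. snd (corner_param d (Fs k)) *
            (of_bool (corner_label d (Fs k) (vs (Suc k mod l)) \<in> S)
             - of_bool (corner_label d (Fs k) (vs k) \<in> S)))
      = (\<Sum>k<l. coord_sum d S (vs (Suc k mod l)) - coord_sum d S (vs k))"
    using step by (intro sum.cong refl coord_sum_diff_in_C_edge[symmetric]) auto
  also have "\<dots> = 0" using \<open>0 < l\<close> by (rule sum_telescope_mod)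
  finally show ?thesis .
qed

theorem lemma3p2:
  fixes d :: nat
  assumes "d \<ge> 2"
  shows "tranquil (Zd d) (C_edges d) d"
  unfolding tranquil_def
proof (intro exI conjI ballI allI impI)
  fix F assume "F \<in> C_edges d"
  then show "bij_betw (corner_label d F) F {1..d}" by (rule bij_betw_corner_label)
next
  fix l vs Fs assume "closed_walk (Zd d) (C_edges d) l vs Fs"
  then have "0 < l"
    and step: "\<And>k. k < l \<Longrightarrow> Fs k \<in> C_edges d \<and> vs k \<in> Fs k \<and> vs (Suc k mod l) \<in> Fs k"
    unfolding closed_walk_def by auto
  show "mg_bridgeless {1..d} (walk_label_multigraph (corner_label d) l vs Fs)"
    unfolding walk_label_multigraph_def
  proof (rule mg_bridgeless_if_cuts_balanced[where w = "\<lambda>k. snd (corner_param d (Fs k))"])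
    fix k assume "k < l"
    then show "(corner_label d (Fs k) (vs k), corner_label d (Fs k) (vs (Suc k mod l)))
        \<in> {1..d} \<times> {1..d}"
      using step bij_betw_corner_label by (blast dest: bij_betwE)
    show "0 < snd (corner_param d (Fs k))"
      using step[OF \<open>k < l\<close>] by (metis corner_paramE snd_conv)
  qed (use C_walk_cuts_balanced[of l Fs d vs] \<open>0 < l\<close> step in simp)
qed

end
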